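(* Let $P\in\mathbb{N}_0^{n\times n}$ be an incidence matrix and let $k\in\mathbb{N}$ with $k>1$. Then the incidence matrix $P'=kP$ does not exclusively represent irreducible morphisms.
   Context: Let $\Sigma=\{a_1,\dots,a_n\}$. A morphism $\varphi:\Sigma^+\to\Sigma^+$ (with $\varphi(uv)=\varphi(u)\varphi(v)$, non-empty images) is Parikh-positive if every letter occurs in $\varphi(a_1)\cdots\varphi(a_n)$. Its incidence matrix is $P(\varphi)=(m_{i,j})$ with $m_{i,j}=|\varphi(a_j)|_{a_i}$ (number of occurrences of $a_i$ in $\varphi(a_j)$). An incidence matrix is any square non-negative integer matrix; throughout, the incidence matrices considered have no zero rows or columns. An automorphism is an injective morphism mapping each letter to a single letter; a morphism is reducible if it equals $\psi_2\circ\psi_1$ with neither $\psi_1,\psi_2$ an automorphism, irreducible otherwise. An incidence matrix $P$ exclusively represents irreducible (resp. reducible) morphisms if every Parikh-positive morphism $\varphi$ with $P(\varphi)=P$ is irreducible (resp. reducible). *)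

theory Defs
  imports Main
begin

text \<open>Alphabet \<open>\<Sigma> = {a_1,...,a_n}\<close> is represented by the letters \<open>0,...,n-1\<close> (type nat);
  words are lists of letters. A morphism \<open>\<Sigma>\<^sup>+ \<rightarrow> \<Sigma>\<^sup>+\<close> is determined by the images of the
  letters, so it is represented by a function \<open>f :: nat \<Rightarrow> nat list\<close> (only its values on
  letters \<open>i < n\<close> matter); it extends to words by \<open>concat (map f w)\<close>.\<close>

definition is_morphism :: "nat \<Rightarrow> (nat \<Rightarrow> nat list) \<Rightarrow> bool" where
  "is_morphism n f \<longleftrightarrow> (\<forall>i<n. f i \<noteq> [] \<and> set (f i) \<subseteq> {..<n})"

definition parikh_positive :: "nat \<Rightarrow> (nat \<Rightarrow> nat list) \<Rightarrow> bool" where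
  "parikh_positive n f \<longleftrightarrow> (\<forall>i<n. i \<in> set (concat (map f [0..<n])))"

definition incidence :: "(nat \<Rightarrow> nat list) \<Rightarrow> nat \<Rightarrow> nat \<Rightarrow> nat" where
  "incidence f i j = count_list (f j) i"

definition is_automorphism :: "nat \<Rightarrow> (nat \<Rightarrow> nat list) \<Rightarrow> bool" where
  "is_automorphism n f \<longleftrightarrow> is_morphism n f \<and> (\<forall>i<n. length (f i) = 1) \<and> inj_on f {..<n}"

definition morph_comp :: "(nat \<Rightarrow> nat list) \<Rightarrow> (nat \<Rightarrow> nat list) \<Rightarrow> nat \<Rightarrow> nat list" where
  "morph_comp g f = (\<lambda>i. concat (map g (f i)))"

definition reducible :: "nat \<Rightarrow> (nat \<Rightarrow> nat list) \<Rightarrow> bool" where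
  "reducible n \<phi> \<longleftrightarrow> (\<exists>\<psi>1 \<psi>2. is_morphism n \<psi>1 \<and> is_morphism n \<psi>2 \<and>
      \<not> is_automorphism n \<psi>1 \<and> \<not> is_automorphism n \<psi>2 \<and>
      (\<forall>i<n. \<phi> i = morph_comp \<psi>2 \<psi>1 i))"

definition irreducible_morph :: "nat \<Rightarrow> (nat \<Rightarrow> nat list) \<Rightarrow> bool" where
  "irreducible_morph n \<phi> \<longleftrightarrow> \<not> reducible n \<phi>"

text \<open>An \<open>n \<times> n\<close> matrix is \<open>P :: nat \<Rightarrow> nat \<Rightarrow> nat\<close>, entries \<open>P i j\<close> for \<open>i, j < n\<close>.\<close>
definition excl_irreducible :: "nat \<Rightarrow> (nat \<Rightarrow> nat \<Rightarrow> nat) \<Rightarrow> bool" where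
  "excl_irreducible n P \<longleftrightarrow> (\<forall>\<phi>. is_morphism n \<phi> \<and> parikh_positive n \<phi> \<and>
      (\<forall>i<n. \<forall>j<n. incidence \<phi> i j = P i j) \<longrightarrow> irreducible_morph n \<phi>)"

end

theory Submission
  imports Defs
begin

text \<open>Let \<open>\<gamma>\<close> be any Parikh-positive morphism with incidence matrix \<open>P\<close>. The morphism
  \<open>a \<mapsto> a\<^sup>k\<close> turns it into one with incidence matrix \<open>kP\<close>, and for \<open>n \<ge> 2\<close> this power map is
  itself a product of two non-automorphisms: raise the letter \<open>a\<^sub>1\<close> to the \<open>k\<close>-th power
  first and all other letters afterwards. Absorbing the first factor into \<open>\<gamma>\<close> leaves a
  morphism that still maps some letter to a word containing \<open>a\<^sub>1\<^sup>k\<close>, so it is no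
  automorphism either.\<close>

definition letter_power :: "nat set \<Rightarrow> nat \<Rightarrow> nat \<Rightarrow> nat list" where
  "letter_power A k i = (if i \<in> A then replicate k i else [i])"

definition matrix_morph :: "nat \<Rightarrow> (nat \<Rightarrow> nat \<Rightarrow> nat) \<Rightarrow> nat \<Rightarrow> nat list" where
  "matrix_morph n P j = concat (map (\<lambda>i. replicate (P i j) i) [0..<n])"

lemma concat_map_concat_map:
  "concat (map h (concat (map g xs))) = concat (map (\<lambda>x. concat (map h (g x))) xs)"
  by (induction xs) auto

lemma count_list_replicate: "count_list (replicate m x) y = (if x = y then m else 0)"
  by (induction m) auto

lemma count_list_concat_map_replicate:
  "count_list (concat (map (replicate k) xs)) y = k * count_list xs y"
  by (induction xs) (auto simp: count_list_replicate)

lemma morph_comp_assoc: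
  "morph_comp h (morph_comp g f) = morph_comp (morph_comp h g) f"
  by (simp add: morph_comp_def fun_eq_iff concat_map_concat_map)

lemma set_morph_comp: "set (morph_comp g f i) = (\<Union>x\<in>set (f i). set (g x))"
  by (simp add: morph_comp_def)

lemma is_morphism_morph_comp:
  assumes "is_morphism n g" and "is_morphism n f"
  shows "is_morphism n (morph_comp g f)"
  unfolding is_morphism_def
proof (intro allI impI conjI)
  fix i
  assume "i < n"
  with assms(2) have "f i \<noteq> []" and f_letters: "set (f i) \<subseteq> {..<n}"
    by (simp_all add: is_morphism_def)
  then have "hd (f i) \<in> set (f i)" by simp
  with f_letters have "hd (f i) < n" by auto
  with assms(1) \<open>hd (f i) \<in> set (f i)\<close> show "morph_comp g f i \<noteq> []"
    by (auto simp: is_morphism_def set_morph_comp simp flip: set_empty)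
  show "set (morph_comp g f i) \<subseteq> {..<n}"
    using assms(1) f_letters by (auto simp: is_morphism_def set_morph_comp)
qed

lemma not_automorphism_if_length:
  assumes "i < n" and "length (f i) \<noteq> 1"
  shows "\<not> is_automorphism n f"
  using assms by (auto simp: is_automorphism_def)

lemma letter_power_comp_complement:
  "morph_comp (letter_power A k) (letter_power (- A) k) = replicate k"
  by (auto simp: fun_eq_iff morph_comp_def letter_power_def map_replicate_const)

lemma is_morphism_letter_power:
  assumes "k > 0"
  shows "is_morphism n (letter_power A k)"
  using assms by (simp add: is_morphism_def letter_power_def)

lemma not_automorphism_letter_power:
  assumes "i \<in> A" and "i < n" and "k \<noteq> 1"
  shows "\<not> is_automorphism n (letter_power A k)"
  using assms by (intro not_automorphism_if_length[of i]) (simp_all add: letter_power_def)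

lemma is_morphism_replicate:
  assumes "k > 0"
  shows "is_morphism n (replicate k)"
  using assms by (simp add: is_morphism_def)

lemma set_morph_comp_replicate:
  assumes "k > 0"
  shows "set (morph_comp (replicate k) f i) = set (f i)"
  using assms by (auto simp: set_morph_comp)

lemma incidence_morph_comp_replicate:
  "incidence (morph_comp (replicate k) f) i j = k * incidence f i j"
  by (simp add: incidence_def morph_comp_def count_list_concat_map_replicate)

lemma parikh_positive_morph_comp_replicate:
  assumes "k > 0" and "parikh_positive n f"
  shows "parikh_positive n (morph_comp (replicate k) f)"
  using assms by (simp add: parikh_positive_def set_morph_comp_replicate)

lemma reducible_morph_comp_replicate:
  assumes "n \<ge> 2" and "k > 1" and "is_morphism n f" and "parikh_positive n f"
  shows "reducible n (morph_comp (replicate k) f)"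
proof -
  define \<alpha> where "\<alpha> = letter_power (- {0}) k"
  define \<beta> where "\<beta> = letter_power {0} k"
  have factorisation: "morph_comp (replicate k) f = morph_comp \<alpha> (morph_comp \<beta> f)"
    using letter_power_comp_complement[of "- {0}" k] by (simp add: \<alpha>_def \<beta>_def morph_comp_assoc)
  have "\<not> is_automorphism n \<alpha>"
    using assms(1,2) unfolding \<alpha>_def by (intro not_automorphism_letter_power[of 1]) auto
  moreover have "\<not> is_automorphism n (morph_comp \<beta> f)"
  proof -
    have "0 \<in> set (concat (map f [0..<n]))"
      using assms(1,4) by (simp add: parikh_positive_def)
    then obtain j where j: "j < n" "0 \<in> set (f j)" by auto
    then obtain xs ys where "f j = xs @ 0 # ys" by (meson split_list)
    then have "length (morph_comp \<beta> f j) \<ge> k"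
      by (simp add: morph_comp_def \<beta>_def letter_power_def)
    with j(1) assms(2) show ?thesis by (intro not_automorphism_if_length[of j]) auto
  qed
  moreover have "is_morphism n \<alpha>" "is_morphism n (morph_comp \<beta> f)"
    using assms(2,3) by (simp_all add: \<alpha>_def \<beta>_def is_morphism_letter_power is_morphism_morph_comp)
  ultimately show ?thesis
    unfolding reducible_def factorisation by blast
qed

lemma incidence_matrix_morph:
  assumes "i < n"
  shows "incidence (matrix_morph n P) i j = P i j"
proof -
  have "count_list (matrix_morph m P j) i = (if i < m then P i j else 0)" for m
    by (induction m) (auto simp: matrix_morph_def count_list_append count_list_replicate)
  with assms show ?thesis by (simp add: incidence_def)
qed

lemma set_matrix_morph: "set (matrix_morph n P j) = {i. i < n \<and> P i j \<noteq> 0}"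
  by (auto simp: matrix_morph_def)

lemma is_morphism_matrix_morph:
  assumes "\<forall>j<n. \<exists>i<n. P i j \<noteq> 0"
  shows "is_morphism n (matrix_morph n P)"
  using assms by (auto simp: is_morphism_def set_matrix_morph simp flip: set_empty)

lemma parikh_positive_matrix_morph:
  assumes "\<forall>i<n. \<exists>j<n. P i j \<noteq> 0"
  shows "parikh_positive n (matrix_morph n P)"
  using assms by (fastforce simp: parikh_positive_def set_matrix_morph)

theorem proposition17:
  fixes n k :: nat and P :: "nat \<Rightarrow> nat \<Rightarrow> nat"
  assumes "n \<ge> 2"
    and "\<forall>i<n. \<exists>j<n. P i j \<noteq> 0"
    and "\<forall>j<n. \<exists>i<n. P i j \<noteq> 0"
    and "k > 1"
  shows "\<not> excl_irreducible n (\<lambda>i j. k * P i j)"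
proof -
  define \<gamma> where "\<gamma> = matrix_morph n P"
  define \<phi> where "\<phi> = morph_comp (replicate k) \<gamma>"
  have \<gamma>: "is_morphism n \<gamma>" "parikh_positive n \<gamma>"
    using assms(2,3) by (simp_all add: \<gamma>_def is_morphism_matrix_morph parikh_positive_matrix_morph)
  have "is_morphism n \<phi>"
    using \<gamma>(1) assms(4) by (simp add: \<phi>_def is_morphism_morph_comp is_morphism_replicate)
  moreover have "parikh_positive n \<phi>"
    using \<gamma>(2) assms(4) by (simp add: \<phi>_def parikh_positive_morph_comp_replicate)
  moreover have "\<forall>i<n. \<forall>j<n. incidence \<phi> i j = k * P i j"
    by (simp add: \<phi>_def \<gamma>_def incidence_morph_comp_replicate incidence_matrix_morph)
  moreover have "reducible n \<phi>"
    using assms(1,4) \<gamma> by (simp add: \<phi>_def reducible_morph_comp_replicate)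
  ultimately show ?thesis
    unfolding excl_irreducible_def irreducible_morph_def by blast
qed

end
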